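(* Let $G$, $S$, $\phi_1,\phi_2$, $G_{\mathrm{aug}}$ be as in the setting below, let $C$ be a cycle of $\Lambda(G_{\mathrm{aug}})$ using only edges of $R(G_{\mathrm{aug}})$ and satisfying properties (1)–(4) below, and let $X_{\mathrm{aug}}=V(C)\cup S$. Then for any two vertices $u,v\in X_{\mathrm{aug}}$ there is a walk from $u$ to $v$ in $\Lambda(G_{\mathrm{aug}})$ of length at most $4|S|$ that uses no edge of $E_{\mathrm{aug}}=E(G_{\mathrm{aug}})\setminus E(G)$.
   Context: Setting: $G$ is a connected 1-plane graph without $\times$-crossings satisfying the kite-edge standing assumption, $S$ is a minimal separating set of $G$, $\phi_1,\phi_2$ are distinct flaps of $G-S$, and $G_{\mathrm{aug}}=G_{\mathrm{aug}}(S,\phi_1,\phi_2)$. Properties of $C$: (1) every vertex of $V_\times(C)$ is in $S$ or is a dummy vertex adjacent to a vertex of $S$; (2) every vertex of $S$ lies in $V_\times(C)$ or is adjacent to a dummy vertex in $V_\times(C)$; (3) there are $G$-vertices not in $S$ inside and outside $C$; (4) $S$ separates in $G_{\mathrm{aug}}$ the $G$-vertices inside $C$ from those outside. Definitions: a 1-plane graph is a graph with a good drawing (edges simple curves; two edges meet only at a common endpoint or a proper crossing; any two edges meet at most once; no three edges cross at a point) where each edge is crossed at most once. For a crossing of $(u,v)$ and $(w,x)$, two endpoints are consecutive if they are not $\{u,v\}$ and not $\{w,x\}$; an $\times$-crossing has no adjacent consecutive endpoints. The planarization $H^\times$ replaces each crossing by a dummy vertex adjacent to its four endpoints. An edge joining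 consecutive endpoints $u,x$ of a crossing with dummy vertex $c$ is a kite edge if it is uncrossed and $H^\times$ has a face bounded exactly by it and $(u,c),(c,x)$; standing assumption: every pair of adjacent consecutive endpoints of a crossing is joined by a kite edge of that crossing. $\Lambda(H)$ is obtained from $H^\times$ by inserting a face vertex inside each face and joining it by an edge to each occurrence of a vertex on the face boundary; $R(H)$ is the subgraph of edges incident to face vertices. $V_\times(C)$ is the set of vertices of $C$ that are $G$-vertices or dummy vertices. Separating sets, minimality and flaps are as usual ($G-S$ disconnected; flaps are its components). $G_{\mathrm{aug}}(S,\phi_1,\phi_2)$ is obtained from $G$ by repeatedly adding a missing kite edge between consecutive endpoints of a crossing whenever this keeps the flaps containing $\phi_1$ and $\phi_2$ distinct in (current graph)$-S$ (updating $\phi_1,\phi_2$ after each addition). *)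

theory Defs
  imports Main
begin

text \<open>
Combinatorial encoding of a 1-plane graph G by its planarization H^x, given as a
combinatorial map (rotation system) of genus 0.  Darts of H^x have type 'd,
vertices of H^x (G-vertices and dummy/crossing vertices) have type 'v.
  alpha: the involution pairing the two darts of an H^x-edge,
  sigma: the rotation (cyclic order of darts around their vertex),
  vx:    the vertex a dart emanates from,
  dum:   the set of dummy (crossing) vertices.
\<close>

record ('v,'d) pmap =
  darts :: "'d set"
  alpha :: "'d \<Rightarrow> 'd"
  sigma :: "'d \<Rightarrow> 'd"
  vx    :: "'d \<Rightarrow> 'v"
  dum   :: "'v set"

definition orb :: "('a \<Rightarrow> 'a) \<Rightarrow> 'a \<Rightarrow> 'a set" where
  "orb f x = {(f ^^ n) x | n. True}"

definition phi :: "('v,'d) pmap \<Rightarrow> 'd \<Rightarrow> 'd" where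
  "phi M = sigma M \<circ> alpha M"

definition hverts :: "('v,'d) pmap \<Rightarrow> 'v set" where
  "hverts M = vx M ` darts M"

definition gverts :: "('v,'d) pmap \<Rightarrow> 'v set" where
  "gverts M = hverts M - dum M"

definition faces :: "('v,'d) pmap \<Rightarrow> 'd set set" where
  "faces M = orb (phi M) ` darts M"

definition hedge :: "('v,'d) pmap \<Rightarrow> 'd \<Rightarrow> 'd set" where
  "hedge M d = {d, alpha M d}"

definition darts_at :: "('v,'d) pmap \<Rightarrow> 'v \<Rightarrow> 'd set" where
  "darts_at M v = {d \<in> darts M. vx M d = v}"

definition is_map :: "('v,'d) pmap \<Rightarrow> bool" where
  "is_map M \<longleftrightarrow> finite (darts M)
     \<and> bij_betw (alpha M) (darts M) (darts M)
     \<and> bij_betw (sigma M) (darts M) (darts M)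
     \<and> (\<forall>d\<in>darts M. alpha M d \<noteq> d \<and> alpha M (alpha M d) = d
                      \<and> vx M (sigma M d) = vx M d)
     \<and> (\<forall>d\<in>darts M. \<forall>d'\<in>darts M. vx M d = vx M d' \<longrightarrow> d' \<in> orb (sigma M) d)"

definition connected_map :: "('v,'d) pmap \<Rightarrow> bool" where
  "connected_map M \<longleftrightarrow> (\<forall>d\<in>darts M. \<forall>d'\<in>darts M.
     (d, d') \<in> {(x, y). x \<in> darts M \<and> (y = alpha M x \<or> y = sigma M x)}\<^sup>*)"

text \<open>Euler's formula V - E + F = 2 (genus 0, i.e. a plane/spherical embedding)\<close>
definition planar_map :: "('v,'d) pmap \<Rightarrow> bool" where
  "planar_map M \<longleftrightarrow> card (hverts M) + card (faces M) = card (darts M) div 2 + 2"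

text \<open>Dummy vertices: degree 4, all neighbours are G-vertices (each edge is crossed
at most once, no three edges through a crossing), and the four endpoints of a
crossing are distinct (two edges meet at most once).  The crossing edges are the
pairs of opposite darts d, sigma(sigma d), so every crossing is proper.\<close>
definition dummy_ok :: "('v,'d) pmap \<Rightarrow> bool" where
  "dummy_ok M \<longleftrightarrow> dum M \<subseteq> hverts M \<and>
     (\<forall>c\<in>dum M. card (darts_at M c) = 4
        \<and> (\<forall>d\<in>darts_at M c. vx M (alpha M d) \<notin> dum M)
        \<and> inj_on (\<lambda>d. vx M (alpha M d)) (darts_at M c))"

text \<open>Edges of G, each represented by the set of darts of its H^x-pieces.\<close>
definition gedges :: "('v,'d) pmap \<Rightarrow> 'd set set" where
  "gedges M =
     {hedge M d | d. d \<in> darts M \<and> vx M d \<notin> dum M \<and> vx M (alpha M d) \<notin> dum M}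
   \<union> {hedge M d \<union> hedge M (sigma M (sigma M d)) | d. d \<in> darts M \<and> vx M d \<in> dum M}"

definition gends :: "('v,'d) pmap \<Rightarrow> 'd set \<Rightarrow> 'v set" where
  "gends M e = vx M ` e - dum M"

definition simple_g :: "('v,'d) pmap \<Rightarrow> bool" where
  "simple_g M \<longleftrightarrow> (\<forall>e\<in>gedges M. card (gends M e) = 2) \<and> inj_on (gends M) (gedges M)"

definition gadj :: "('v,'d) pmap \<Rightarrow> 'v \<Rightarrow> 'v \<Rightarrow> bool" where
  "gadj M u v \<longleftrightarrow> (\<exists>e\<in>gedges M. gends M e = {u, v})"

definition hadj :: "('v,'d) pmap \<Rightarrow> 'v \<Rightarrow> 'v \<Rightarrow> bool" where
  "hadj M u v \<longleftrightarrow> (\<exists>d\<in>darts M. vx M d = u \<and> vx M (alpha M d) = v)"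

definition one_plane :: "('v,'d) pmap \<Rightarrow> bool" where
  "one_plane M \<longleftrightarrow> is_map M \<and> connected_map M \<and> planar_map M \<and> dummy_ok M \<and> simple_g M"

text \<open>For a dart d at a crossing c, the endpoints vx(alpha d) and vx(alpha(sigma d))
are consecutive endpoints of the crossing (every consecutive pair arises this way).
The face of H^x containing the angle at c between d and sigma d is the orbit of
sigma d; the kite condition says this face is a triangle c, x, u whose third side
is an (automatically uncrossed) edge joining x and u.\<close>
definition cons1 :: "('v,'d) pmap \<Rightarrow> 'd \<Rightarrow> 'v" where
  "cons1 M d = vx M (alpha M d)"
definition cons2 :: "('v,'d) pmap \<Rightarrow> 'd \<Rightarrow> 'v" where
  "cons2 M d = vx M (alpha M (sigma M d))"

definition kite :: "('v,'d) pmap \<Rightarrow> 'd \<Rightarrow> bool" where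
  "kite M d \<longleftrightarrow> phi M (phi M (sigma M d)) = alpha M d
                \<and> phi M (phi M (phi M (sigma M d))) = sigma M d"

definition no_x_crossings :: "('v,'d) pmap \<Rightarrow> bool" where
  "no_x_crossings M \<longleftrightarrow>
     (\<forall>c\<in>dum M. \<exists>d\<in>darts_at M c. gadj M (cons1 M d) (cons2 M d))"

definition kite_assumption :: "('v,'d) pmap \<Rightarrow> bool" where
  "kite_assumption M \<longleftrightarrow>
     (\<forall>c\<in>dum M. \<forall>d\<in>darts_at M c. gadj M (cons1 M d) (cons2 M d) \<longrightarrow> kite M d)"

definition gconn :: "('v,'d) pmap \<Rightarrow> 'v set \<Rightarrow> 'v set set \<Rightarrow> 'v \<Rightarrow> 'v \<Rightarrow> bool" where
  "gconn M S P a b \<longleftrightarrow>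
     (a, b) \<in> {(u, v). (gadj M u v \<or> {u, v} \<in> P) \<and> u \<notin> S \<and> v \<notin> S}\<^sup>*"

definition separating :: "('v,'d) pmap \<Rightarrow> 'v set \<Rightarrow> bool" where
  "separating M S \<longleftrightarrow> S \<subseteq> gverts M \<and>
     (\<exists>a\<in>gverts M - S. \<exists>b\<in>gverts M - S. \<not> gconn M S {} a b)"

definition minimal_sep :: "('v,'d) pmap \<Rightarrow> 'v set \<Rightarrow> bool" where
  "minimal_sep M S \<longleftrightarrow> separating M S \<and> (\<forall>S'. S' \<subset> S \<longrightarrow> \<not> separating M S')"

definition flap :: "('v,'d) pmap \<Rightarrow> 'v set \<Rightarrow> 'v set \<Rightarrow> bool" where
  "flap M S F \<longleftrightarrow> (\<exists>a\<in>gverts M - S. F = {b \<in> gverts M - S. gconn M S {} a b})"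

text \<open>the flaps of (M + P) - S containing F1 and F2 are distinct\<close>
definition keeps_apart :: "('v,'d) pmap \<Rightarrow> 'v set \<Rightarrow> 'v set \<Rightarrow> 'v set \<Rightarrow> 'v set set \<Rightarrow> bool" where
  "keeps_apart M S F1 F2 P \<longleftrightarrow> (\<forall>a\<in>F1. \<forall>b\<in>F2. \<not> gconn M S P a b)"

text \<open>One augmentation step: M' is M with one new uncrossed edge (darts a, alpha a)
inserted so that it is a kite edge of a crossing c of M joining consecutive
endpoints that are non-adjacent in M, and the flaps stay distinct.\<close>
definition aug_step :: "'v set \<Rightarrow> 'v set \<Rightarrow> 'v set \<Rightarrow> ('v,'d) pmap \<Rightarrow> ('v,'d) pmap \<Rightarrow> bool" where
  "aug_step S F1 F2 M M' \<longleftrightarrow> one_plane M'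
     \<and> (\<exists>a. a \<notin> darts M \<and> darts M' = darts M \<union> {a, alpha M' a})
     \<and> dum M' = dum M
     \<and> (\<forall>d\<in>darts M. alpha M' d = alpha M d \<and> vx M' d = vx M d
          \<and> sigma M d = (sigma M' ^^ (LEAST n. 0 < n \<and> (sigma M' ^^ n) d \<in> darts M)) d)
     \<and> (\<exists>c\<in>dum M. \<exists>d\<in>darts_at M c. \<not> gadj M (cons1 M d) (cons2 M d) \<and> kite M' d)
     \<and> keeps_apart M' S F1 F2 {}"

text \<open>G_aug(S, F1, F2): result of a maximal sequence of augmentation steps.\<close>
definition aug_result :: "'v set \<Rightarrow> 'v set \<Rightarrow> 'v set \<Rightarrow> ('v,'d) pmap \<Rightarrow> ('v,'d) pmap \<Rightarrow> bool" where
  "aug_result S F1 F2 M Ma \<longleftrightarrow>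
     (M, Ma) \<in> {(X, Y). aug_step S F1 F2 X Y}\<^sup>*
   \<and> (\<forall>c\<in>dum Ma. \<forall>d\<in>darts_at Ma c. \<not> gadj Ma (cons1 Ma d) (cons2 Ma d) \<longrightarrow>
        \<not> keeps_apart Ma S F1 F2 {{cons1 Ma d, cons2 Ma d}})"

text \<open>The graph Lambda(H): vertices of H^x and one vertex per face; edges are the
H^x-edges and, for each dart d, the R-edge joining the face vertex of the face
orbit of d to the occurrence (corner) of vx d between sigma^-1 d and d.\<close>
datatype ('v,'d) lv = HV 'v | FV "'d set"
datatype 'd le = HE "'d set" | RE 'd

definition lam_edges :: "('v,'d) pmap \<Rightarrow> 'd le set" where
  "lam_edges M = HE ` hedge M ` darts M \<union> RE ` darts M"

fun lam_ends :: "('v,'d) pmap \<Rightarrow> 'd le \<Rightarrow> ('v,'d) lv set" where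
  "lam_ends M (HE h) = HV ` vx M ` h"
| "lam_ends M (RE d) = {HV (vx M d), FV (orb (phi M) d)}"

fun is_RE :: "'d le \<Rightarrow> bool" where
  "is_RE (RE d) = True"
| "is_RE (HE h) = False"

definition lam_walk :: "('v,'d) pmap \<Rightarrow> ('v,'d) lv list \<Rightarrow> 'd le list \<Rightarrow> bool" where
  "lam_walk M vs es \<longleftrightarrow> length vs = Suc (length es) \<and>
     (\<forall>i<length es. es ! i \<in> lam_edges M \<and> lam_ends M (es ! i) = {vs ! i, vs ! Suc i})"

definition lam_cycle :: "('v,'d) pmap \<Rightarrow> ('v,'d) lv list \<Rightarrow> 'd le list \<Rightarrow> bool" where
  "lam_cycle M cv ce \<longleftrightarrow> length cv = length ce \<and> 2 \<le> length ce \<and> distinct cv \<and> distinct ce \<and>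
     (\<forall>i<length ce. ce ! i \<in> lam_edges M \<and>
        lam_ends M (ce ! i) = {cv ! i, cv ! ((Suc i) mod length ce)})"

text \<open>Sides of a cycle of R-edges (with corner darts Cd) in the plane map Lambda(M).
The faces of Lambda(M) are triangles T_d, one per dart d (face vertex of orb d, vx d,
vx (alpha d)); T_d shares the H-edge with T_(alpha d) and the R-edge RE (phi d) with
T_(phi d).  Two triangles lie on the same side of the cycle iff they are connected
through edges not on the cycle; a vertex off the cycle lies on the side of its
incident triangles.  (By Jordan there are exactly two sides: inside and outside.)\<close>
definition side_rel :: "('v,'d) pmap \<Rightarrow> 'd set \<Rightarrow> ('d \<times> 'd) set" where
  "side_rel M Cd = {(d, alpha M d) | d. d \<in> darts M}
                 \<union> {(d, phi M d) | d. d \<in> darts M \<and> phi M d \<notin> Cd}"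

definition same_side :: "('v,'d) pmap \<Rightarrow> 'd le list \<Rightarrow> 'v \<Rightarrow> 'v \<Rightarrow> bool" where
  "same_side M ce x y \<longleftrightarrow>
     (\<exists>d\<in>darts_at M x. \<exists>d'\<in>darts_at M y.
        (d, d') \<in> (side_rel M {d. RE d \<in> set ce} \<union> (side_rel M {d. RE d \<in> set ce})\<inverse>)\<^sup>*)"

end

theory Submission
  imports Defs
begin

text \<open>
  The cycle C uses only R-edges, so each of its edges has an end that is a vertex of H^x, and
  by (1) that vertex is in S or is a crossing adjacent to S. Choosing for the k-th edge such a
  vertex s_k of S gives a cyclic sequence of vertices of S in which consecutive ones are at
  distance at most 4, and by (2) every vertex of S is within distance 3 of some s_k. Hence
  "distance at most 4" connects S, so any two vertices of S are at distance at most 4(|S| - 1),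
  and every vertex of X_aug is within distance 2 of S, giving 4|S| in total. All edges used are
  R-edges or H^x-edges at crossings, and the augmentation never changes the darts at a
  crossing, so no edge of E_aug is used.
\<close>

definition reach_within :: "'a rel \<Rightarrow> nat \<Rightarrow> 'a \<Rightarrow> 'a \<Rightarrow> bool" where
  "reach_within R n x y \<longleftrightarrow> (\<exists>k\<le>n. (x, y) \<in> R ^^ k)"

lemma relpow_sym:
  assumes "sym R" "(x, y) \<in> R ^^ n"
  shows "(y, x) \<in> R ^^ n"
  using assms(2)
proof (induction n arbitrary: y)
  case 0
  then show ?case by simp
next
  case (Suc n)
  then obtain z where "(x, z) \<in> R ^^ n" "(z, y) \<in> R" by (blast elim: relpow_Suc_E)
  then have "(y, z) \<in> R" "(z, x) \<in> R ^^ n" using Suc.IH assms(1) by (auto dest: symD)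
  then show ?case by (rule relpow_Suc_I2)
qed

lemma reach_within_refl: "reach_within R n x x"
  unfolding reach_within_def by (metis le0 relpow_0_I)

lemma reach_within_edge: "(x, y) \<in> R \<Longrightarrow> reach_within R 1 x y"
  unfolding reach_within_def by (metis le_refl relpow_1)

lemma reach_within_mono: "reach_within R n x y \<Longrightarrow> n \<le> m \<Longrightarrow> reach_within R m x y"
  unfolding reach_within_def by (meson order_trans)

lemma reach_within_trans:
  "reach_within R n x y \<Longrightarrow> reach_within R m y z \<Longrightarrow> reach_within R (n + m) x z"
  unfolding reach_within_def by (meson add_mono relpow_trans)

lemma reach_within_sym: "sym R \<Longrightarrow> reach_within R n x y \<Longrightarrow> reach_within R n y x"
  unfolding reach_within_def by (meson relpow_sym)

lemma reach_within_card_bound: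
  assumes "finite S" "s \<in> S" "t \<in> S"
    and gap: "\<And>B. B \<subseteq> S \<Longrightarrow> s \<in> B \<Longrightarrow> S - B \<noteq> {} \<Longrightarrow>
                \<exists>x\<in>B. \<exists>y\<in>S - B. reach_within R m x y"
  shows "reach_within R (m * (card S - 1)) s t"
proof -
  define ball where "ball k = {x \<in> S. reach_within R (m * k) s x}" for k
  have ball_sub: "ball k \<subseteq> S" for k
    unfolding ball_def by blast
  have finite_ball: "finite (ball k)" for k
    using ball_sub assms(1) by (rule finite_subset)
  have s_ball: "s \<in> ball k" for k
    unfolding ball_def using assms(2) by (simp add: reach_within_refl)
  have ball_mono: "ball k \<subseteq> ball (Suc k)" for k
    unfolding ball_def using reach_within_mono by fastforce
  have grows: "ball k = S \<or> k < card (ball k)" for k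
  proof (induction k)
    case 0
    show ?case using s_ball finite_ball by (auto simp: card_gt_0_iff)
  next
    case (Suc k)
    show ?case
    proof (cases "ball k = S")
      case True
      then show ?thesis using ball_mono[of k] ball_sub[of "Suc k"] by blast
    next
      case False
      then obtain x y where xy: "x \<in> ball k" "y \<in> S - ball k" "reach_within R m x y"
        using gap[OF ball_sub s_ball] ball_sub by blast
      then have "reach_within R (m * k + m) s y"
        using reach_within_trans[of R "m * k" s x] unfolding ball_def by blast
      then have "insert y (ball k) \<subseteq> ball (Suc k)"
        using xy(2) ball_mono unfolding ball_def by (auto simp: add.commute)
      then have "Suc (card (ball k)) \<le> card (ball (Suc k))"
        using xy(2) finite_ball by (metis Diff_iff card_insert_disjoint card_mono)
      then show ?thesis using Suc.IH False by simp
    qed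
  qed
  have "ball (card S - 1) = S"
  proof (rule ccontr)
    assume "ball (card S - 1) \<noteq> S"
    then have "card S \<le> card (ball (card S - 1))"
      using grows[of "card S - 1"] by simp
    then show False
      using card_seteq[OF assms(1) ball_sub] \<open>ball (card S - 1) \<noteq> S\<close> by blast
  qed
  then show ?thesis
    using assms(3) unfolding ball_def by blast
qed

lemma ex_switch_below: "P 0 \<Longrightarrow> \<not> P N \<Longrightarrow> \<exists>k<N. P k \<and> \<not> P (Suc k)"
  by (induction N) (auto simp: less_Suc_eq)

lemma cyclic_chain_bridges_cut:
  assumes "sym R" "0 < n"
    and f_in: "\<And>i. i < n \<Longrightarrow> f i \<in> S"
    and f_step: "\<And>i. i < n \<Longrightarrow> reach_within R m (f i) (f (Suc i mod n))"
    and f_near: "\<And>x. x \<in> S \<Longrightarrow> \<exists>i<n. reach_within R m x (f i)"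
    and x: "x \<in> S \<inter> B" and y: "y \<in> S - B"
  shows "\<exists>u\<in>B. \<exists>v\<in>S - B. reach_within R m u v"
proof -
  obtain i where i: "i < n" "reach_within R m x (f i)" using f_near x by blast
  obtain j where j: "j < n" "reach_within R m y (f j)" using f_near y by blast
  define g where "g k = f ((i + k) mod n)" for k
  have g_in: "g k \<in> S" for k
    unfolding g_def using f_in assms(2) by simp
  have g_step: "reach_within R m (g k) (g (Suc k))" for k
    unfolding g_def using f_step[of "(i + k) mod n"] assms(2) by (simp add: mod_Suc_eq)
  have g_end: "g (j + n - i) = f j"
    unfolding g_def using i(1) j(1) by simp
  show ?thesis
  proof (cases "g 0 \<in> B")
    case False
    then show ?thesis using x i g_in[of 0] unfolding g_def by auto
  next
    case g0: True
    show ?thesis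
    proof (cases "g (j + n - i) \<in> B")
      case True
      then show ?thesis using y j g_end reach_within_sym[OF assms(1)] by fastforce
    next
      case False
      then obtain k where "g k \<in> B" "g (Suc k) \<notin> B"
        using ex_switch_below[of "\<lambda>k. g k \<in> B"] g0 by blast
      then show ?thesis using g_in g_step by blast
    qed
  qed
qed

lemma edge_ends_reach_within_two:
  assumes "sym R" "(x, y) \<in> R" "reach_within R 1 x s \<or> reach_within R 1 y s"
  shows "reach_within R 2 x s \<and> reach_within R 2 y s"
proof -
  have "reach_within R 1 x y" "reach_within R 1 y x"
    using reach_within_edge assms(1,2) by (metis symD)+
  then have "reach_within R (1 + 1) x s \<and> reach_within R (1 + 1) y s"
    using assms(3) reach_within_trans reach_within_mono by (metis le_add2)
  then show ?thesis by (simp only: one_add_one)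
qed

lemma cycle_hubs_reach_within:
  assumes "sym R" "finite S"
    and T: "\<And>k. k < length cv \<Longrightarrow> T k \<in> S \<and> reach_within R 2 (cv ! k) (T k)
      \<and> reach_within R 2 (cv ! (Suc k mod length cv)) (T k)"
    and hub_near: "\<And>s. s \<in> S \<Longrightarrow> \<exists>x\<in>set cv. reach_within R 1 x s"
    and st: "s \<in> S" "t \<in> S"
  shows "reach_within R (4 * (card S - 1)) s t"
proof (rule reach_within_card_bound[OF assms(2) st])
  let ?n = "length cv"
  note reverse = reach_within_sym[OF assms(1)]
  have "0 < ?n" using hub_near[OF st(1)] by auto
  have T_step: "reach_within R 4 (T k) (T (Suc k mod ?n))" if k: "k < ?n" for k
  proof -
    have "Suc k mod ?n < ?n" using k by (intro mod_less_divisor) auto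
    then have "reach_within R (2 + 2) (T k) (T (Suc k mod ?n))"
      using reach_within_trans[OF reverse] T k by blast
    then show ?thesis by simp
  qed
  have T_near: "\<exists>i<?n. reach_within R 4 s (T i)" if s: "s \<in> S" for s
  proof -
    obtain i where i: "i < ?n" "reach_within R 1 (cv ! i) s"
      using hub_near[OF s] by (metis in_set_conv_nth)
    then have "reach_within R (1 + 2) s (T i)"
      using reach_within_trans[OF reverse] T by blast
    then show ?thesis using i(1) reach_within_mono by fastforce
  qed
  fix B assume B: "B \<subseteq> S" "s \<in> B" "S - B \<noteq> {}"
  then obtain y where "y \<in> S - B" by blast
  then show "\<exists>x\<in>B. \<exists>y\<in>S - B. reach_within R 4 x y"
    using cyclic_chain_bridges_cut[OF assms(1) \<open>0 < ?n\<close>, of T S 4 s B y] B st T T_step T_near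
    by blast
qed

lemma cycle_with_hubs_reach_within:
  assumes "sym R" "finite S"
    and cycle_edge: "\<And>k. k < length cv \<Longrightarrow> (cv ! k, cv ! (Suc k mod length cv)) \<in> R"
    and edge_hub: "\<And>k. k < length cv \<Longrightarrow>
      \<exists>s\<in>S. reach_within R 1 (cv ! k) s \<or> reach_within R 1 (cv ! (Suc k mod length cv)) s"
    and hub_near: "\<And>s. s \<in> S \<Longrightarrow> \<exists>x\<in>set cv. reach_within R 1 x s"
    and p: "p \<in> set cv \<union> S" and q: "q \<in> set cv \<union> S"
  shows "reach_within R (4 * card S) p q"
proof -
  obtain T where T: "\<And>k. k < length cv \<Longrightarrow> T k \<in> S \<and> reach_within R 2 (cv ! k) (T k)
      \<and> reach_within R 2 (cv ! (Suc k mod length cv)) (T k)"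
    using edge_ends_reach_within_two[OF assms(1) cycle_edge] edge_hub by metis
  have to_hub: "\<exists>s\<in>S. reach_within R 2 x s" if x: "x \<in> set cv \<union> S" for x
  proof (cases "x \<in> S")
    case True
    then show ?thesis using reach_within_refl[of R 2 x] by blast
  next
    case False
    then obtain k where "k < length cv" "x = cv ! k" using x by (metis UnE in_set_conv_nth)
    then show ?thesis using T by blast
  qed
  obtain s t where s: "s \<in> S" "reach_within R 2 p s" and t: "t \<in> S" "reach_within R 2 q t"
    using to_hub p q by blast
  have "reach_within R (2 + 4 * (card S - 1) + 2) p q"
    using reach_within_trans[OF reach_within_trans[OF s(2)
          cycle_hubs_reach_within[OF assms(1,2) T hub_near s(1) t(1)]]
        reach_within_sym[OF assms(1) t(2)]] .
  moreover have "2 + 4 * (card S - 1) + 2 = 4 * card S"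
    using s(1) assms(2) card_gt_0_iff[of S] by auto
  ultimately show ?thesis by simp
qed

definition old_lam_adj :: "('v,'d) pmap \<Rightarrow> ('v,'d) pmap \<Rightarrow> ('v,'d) lv rel" where
  "old_lam_adj Ma M = {(p, q). \<exists>e\<in>lam_edges Ma. lam_ends Ma e = {p, q}
      \<and> e \<notin> HE ` hedge Ma ` (darts Ma - darts M)}"

lemma sym_old_lam_adj: "sym (old_lam_adj Ma M)"
  unfolding old_lam_adj_def sym_def by (auto simp: insert_commute)

lemma lam_walk_if_relpow_old_lam_adj:
  assumes "(p, q) \<in> old_lam_adj Ma M ^^ k"
  shows "\<exists>vs es. lam_walk Ma vs es \<and> vs ! 0 = p \<and> vs ! length es = q \<and> length es = k
           \<and> (\<forall>e\<in>set es. e \<notin> HE ` hedge Ma ` (darts Ma - darts M))"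
  using assms
proof (induction k arbitrary: p)
  case 0
  then show ?case
    by (intro exI[of _ "[p]"] exI[of _ "[]"]) (simp add: lam_walk_def)
next
  case (Suc k)
  then obtain r where "(p, r) \<in> old_lam_adj Ma M" "(r, q) \<in> old_lam_adj Ma M ^^ k"
    by (blast dest: relpow_Suc_D2)
  moreover obtain e where e: "e \<in> lam_edges Ma" "lam_ends Ma e = {p, r}"
      "e \<notin> HE ` hedge Ma ` (darts Ma - darts M)"
    using calculation(1) unfolding old_lam_adj_def by blast
  ultimately obtain vs es where w: "lam_walk Ma vs es" "vs ! 0 = r" "vs ! length es = q"
      "length es = k" "\<forall>e\<in>set es. e \<notin> HE ` hedge Ma ` (darts Ma - darts M)"
    using Suc.IH by blast
  have "lam_walk Ma (p # vs) (e # es)"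
    using w(1,2) e(1,2) unfolding lam_walk_def by (auto simp: nth_Cons split: nat.splits)
  then show ?case
    using w e by (intro exI[of _ "p # vs"] exI[of _ "e # es"]) simp
qed

lemma lam_walk_if_reach_within:
  assumes "reach_within (old_lam_adj Ma M) n p q"
  shows "\<exists>vs es. lam_walk Ma vs es \<and> vs ! 0 = p \<and> vs ! length es = q \<and> length es \<le> n
           \<and> (\<forall>e\<in>set es. e \<notin> HE ` hedge Ma ` (darts Ma - darts M))"
proof -
  obtain k where "k \<le> n" "(p, q) \<in> old_lam_adj Ma M ^^ k"
    using assms unfolding reach_within_def by blast
  then show ?thesis
    using lam_walk_if_relpow_old_lam_adj by fastforce
qed

lemma lam_cycle_R_edge:
  assumes "lam_cycle Ma cv ce" "\<forall>e\<in>set ce. is_RE e" "k < length cv"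
  obtains d where "RE d \<in> lam_edges Ma"
    "{HV (vx Ma d), FV (orb (phi Ma) d)} = {cv ! k, cv ! (Suc k mod length cv)}"
proof -
  obtain d where "ce ! k = RE d"
    using assms unfolding lam_cycle_def by (metis is_RE.elims(2) nth_mem)
  then show thesis
    using assms(1,3) that unfolding lam_cycle_def by auto
qed

lemma lam_cycle_R_edge_old:
  assumes "lam_cycle Ma cv ce" "\<forall>e\<in>set ce. is_RE e" "k < length cv"
  shows "(cv ! k, cv ! (Suc k mod length cv)) \<in> old_lam_adj Ma M"
proof -
  obtain d where "RE d \<in> lam_edges Ma" "lam_ends Ma (RE d) = {cv ! k, cv ! (Suc k mod length cv)}"
    using lam_cycle_R_edge[OF assms] by auto
  then show ?thesis
    unfolding old_lam_adj_def by (intro CollectI case_prodI bexI) auto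
qed

lemma lam_cycle_R_edge_near:
  assumes "lam_cycle Ma cv ce" "\<forall>e\<in>set ce. is_RE e" "k < length cv"
    and near: "\<And>v. HV v \<in> set cv \<Longrightarrow> \<exists>s\<in>T. reach_within R 1 (HV v) s"
  shows "\<exists>s\<in>T. reach_within R 1 (cv ! k) s \<or> reach_within R 1 (cv ! (Suc k mod length cv)) s"
proof -
  have "Suc k mod length cv < length cv"
    using assms(3) by (intro mod_less_divisor) auto
  then have "cv ! k \<in> set cv" "cv ! (Suc k mod length cv) \<in> set cv"
    using assms(3) by auto
  moreover obtain d where "{HV (vx Ma d), FV (orb (phi Ma) d)} = {cv ! k, cv ! (Suc k mod length cv)}"
    using lam_cycle_R_edge[OF assms(1-3)] by blast
  ultimately show ?thesis
    using near by (metis doubleton_eq_iff)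
qed

text \<open>A crossing keeps its four darts under augmentation, since it has degree 4 before and after.\<close>

lemma aug_step_darts_at_dum:
  assumes step: "aug_step S F1 F2 X Y" and X: "one_plane X" and c: "c \<in> dum X"
  shows "darts_at Y c = darts_at X c"
proof -
  have Y: "one_plane Y" "dum Y = dum X" "darts X \<subseteq> darts Y"
      "\<forall>d\<in>darts X. vx Y d = vx X d"
    using step unfolding aug_step_def by auto
  have "darts_at X c \<subseteq> darts_at Y c"
    using Y(3,4) unfolding darts_at_def by auto
  moreover have "finite (darts_at Y c)"
    using Y(1) unfolding one_plane_def is_map_def darts_at_def by simp
  moreover have "card (darts_at Y c) = card (darts_at X c)"
    using X Y(1,2) c unfolding one_plane_def dummy_ok_def by auto
  ultimately show ?thesis by (metis card_subset_eq)
qed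

lemma aug_steps_preserve:
  assumes "(M, X) \<in> {(X, Y). aug_step S F1 F2 X Y}\<^sup>*" "one_plane M"
  shows "one_plane X \<and> darts M \<subseteq> darts X \<and> dum X = dum M
     \<and> (\<forall>d\<in>darts M. alpha X d = alpha M d \<and> vx X d = vx M d)
     \<and> (\<forall>c\<in>dum M. darts_at X c = darts_at M c)"
  using assms(1)
proof induction
  case base
  then show ?case using assms(2) by simp
next
  case (step X Y)
  then have "aug_step S F1 F2 X Y" by simp
  then show ?case
    using step.IH aug_step_darts_at_dum[of S F1 F2 X Y] unfolding aug_step_def by auto
qed

lemma aug_result_crossing_edge_old:
  assumes aug: "aug_result S F1 F2 M Ma" and M: "one_plane M"
    and c: "c \<in> dum Ma" and cs: "hadj Ma c s"
  shows "(HV c, HV s) \<in> old_lam_adj Ma M"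
proof -
  have inv: "dum Ma = dum M" "\<forall>d\<in>darts M. alpha Ma d = alpha M d"
      "\<forall>c\<in>dum M. darts_at Ma c = darts_at M c"
    using aug_steps_preserve[OF _ M] aug unfolding aug_result_def by blast+
  obtain d where d: "d \<in> darts Ma" "vx Ma d = c" "vx Ma (alpha Ma d) = s"
    using cs unfolding hadj_def by blast
  have "d \<in> darts M"
    using d inv(1,3) c unfolding darts_at_def by auto
  moreover have "alpha M d \<in> darts M"
    using M calculation unfolding one_plane_def is_map_def by (metis bij_betw_apply)
  ultimately have "hedge Ma d \<subseteq> darts M"
    using inv(2) unfolding hedge_def by auto
  then have "HE (hedge Ma d) \<notin> HE ` hedge Ma ` (darts Ma - darts M)"
    unfolding hedge_def by blast
  moreover have "HE (hedge Ma d) \<in> lam_edges Ma"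
    using d(1) unfolding lam_edges_def by blast
  moreover have "lam_ends Ma (HE (hedge Ma d)) = {HV c, HV s}"
    using d unfolding hedge_def by auto
  ultimately show ?thesis
    unfolding old_lam_adj_def by blast
qed

lemma finite_if_separating: "one_plane M \<Longrightarrow> separating M S \<Longrightarrow> finite S"
  unfolding one_plane_def is_map_def separating_def gverts_def hverts_def
  by (meson finite_Diff finite_imageI finite_subset)

lemma aug_result_reach_within_one:
  assumes "aug_result S F1 F2 M Ma" "one_plane M" "v = s \<or> v \<in> dum Ma \<and> hadj Ma v s"
  shows "reach_within (old_lam_adj Ma M) 1 (HV v) (HV s)"
  using assms aug_result_crossing_edge_old reach_within_refl reach_within_edge by metis

theorem lemma2:
  fixes M Ma :: "('v,'d) pmap" and S F1 F2 :: "'v set"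
    and cv :: "('v,'d) lv list" and ce :: "'d le list"
  assumes G: "one_plane M" "no_x_crossings M" "kite_assumption M"
    and S: "minimal_sep M S"
    and flaps: "flap M S F1" "flap M S F2" "F1 \<noteq> F2"
    and aug: "aug_result S F1 F2 M Ma"
    and C: "lam_cycle Ma cv ce" "\<forall>e\<in>set ce. is_RE e"
    and P1: "\<forall>v. HV v \<in> set cv \<longrightarrow> v \<in> S \<or> (v \<in> dum Ma \<and> (\<exists>s\<in>S. hadj Ma v s))"
    and P2: "\<forall>s\<in>S. HV s \<in> set cv \<or> (\<exists>c\<in>dum Ma. HV c \<in> set cv \<and> hadj Ma c s)"
    and P3: "\<exists>x\<in>gverts M - S. \<exists>y\<in>gverts M - S. HV x \<notin> set cv \<and> HV y \<notin> set cv
               \<and> \<not> same_side Ma ce x y"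
    and P4: "\<forall>x\<in>gverts M - S. \<forall>y\<in>gverts M - S. HV x \<notin> set cv \<and> HV y \<notin> set cv
               \<and> \<not> same_side Ma ce x y \<longrightarrow> \<not> gconn Ma S {} x y"
  shows "\<forall>p\<in>set cv \<union> HV ` S. \<forall>q\<in>set cv \<union> HV ` S.
           \<exists>vs es. lam_walk Ma vs es \<and> vs ! 0 = p \<and> vs ! length es = q
             \<and> length es \<le> 4 * card S
             \<and> (\<forall>e\<in>set es. e \<notin> HE ` hedge Ma ` (darts Ma - darts M))"
proof -
  let ?R = "old_lam_adj Ma M"
  have near: "\<exists>s\<in>HV ` S. reach_within ?R 1 (HV v) s" if "HV v \<in> set cv" for v
    using P1 that aug_result_reach_within_one[OF aug G(1)] by blast
  have hub_near: "\<exists>x\<in>set cv. reach_within ?R 1 x s" if "s \<in> HV ` S" for s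
    using P2 that aug_result_reach_within_one[OF aug G(1)] by blast
  \<comment> \<open>Without the annotation the dart type of \<open>HV ` S\<close> would be a fresh type variable.\<close>
  have "card (HV ` S :: ('v,'d) lv set) = card S"
    by (rule card_image) (simp add: inj_on_def)
  moreover have "reach_within ?R (4 * card (HV ` S :: ('v,'d) lv set)) p q"
    if "p \<in> set cv \<union> HV ` S" "q \<in> set cv \<union> HV ` S" for p q
    using cycle_with_hubs_reach_within[OF sym_old_lam_adj finite_imageI
        lam_cycle_R_edge_old[OF C] lam_cycle_R_edge_near[OF C _ near] hub_near that]
      finite_if_separating[OF G(1)] S unfolding minimal_sep_def by blast
  ultimately have reach: "reach_within ?R (4 * card S) p q"
    if "p \<in> set cv \<union> HV ` S" "q \<in> set cv \<union> HV ` S" for p q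
    using that by simp
  show ?thesis
    by (blast intro: lam_walk_if_reach_within reach)
qed

end
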